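(* Let $k\ge0$ be an integer and let $G=(X\cup Y,E)$ be a bipartite graph that contains a vertex with more than $2k+2$ non-leaf neighbors. Then $G$ is not 2-layer $k$-planar.
   Context: A leaf is a vertex with exactly one neighbor. A 2-layer drawing of a bipartite graph $G=(X\cup Y,E)$ ($X\cap Y=\emptyset$, $E\subseteq X\times Y$) is a pair $(<_X,<_Y)$ of strict linear orders on $X$ and $Y$. Edges $\{x,y\},\{x',y'\}$ with $x\ne x'\in X$, $y\ne y'\in Y$ cross if $x<_Xx'$ and $y'<_Yy$. The drawing is $k$-planar if every edge crosses at most $k$ edges; $G$ is 2-layer $k$-planar if it admits such a drawing. *)

theory Defs
  imports Main
begin

text \<open>A bipartite graph G = (X \<union> Y, E): X, Y disjoint finite vertex sets, E \<subseteq> X \<times> Y.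
  An edge {x,y} with x \<in> X, y \<in> Y is represented as the pair (x,y).\<close>

definition bipartite_graph :: "'a set \<Rightarrow> 'a set \<Rightarrow> ('a \<times> 'a) set \<Rightarrow> bool" where
  "bipartite_graph X Y E \<longleftrightarrow> finite X \<and> finite Y \<and> X \<inter> Y = {} \<and> E \<subseteq> X \<times> Y"

definition neighbors :: "('a \<times> 'a) set \<Rightarrow> 'a \<Rightarrow> 'a set" where
  "neighbors E v = {u. (v, u) \<in> E \<or> (u, v) \<in> E}"

definition is_leaf :: "('a \<times> 'a) set \<Rightarrow> 'a \<Rightarrow> bool" where
  "is_leaf E v \<longleftrightarrow> card (neighbors E v) = 1"

definition edges_cross :: "'a rel \<Rightarrow> 'a rel \<Rightarrow> 'a \<times> 'a \<Rightarrow> 'a \<times> 'a \<Rightarrow> bool" where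
  "edges_cross ox oy e e' \<longleftrightarrow>
     (let (x, y) = e; (x', y') = e' in
       x \<noteq> x' \<and> y \<noteq> y' \<and>
       (((x, x') \<in> ox \<and> (y', y) \<in> oy) \<or> ((x', x) \<in> ox \<and> (y, y') \<in> oy)))"

definition two_layer_drawing :: "'a set \<Rightarrow> 'a set \<Rightarrow> 'a rel \<Rightarrow> 'a rel \<Rightarrow> bool" where
  "two_layer_drawing X Y ox oy \<longleftrightarrow>
     strict_linear_order_on X ox \<and> ox \<subseteq> X \<times> X \<and>
     strict_linear_order_on Y oy \<and> oy \<subseteq> Y \<times> Y"

definition k_planar_drawing :: "nat \<Rightarrow> ('a \<times> 'a) set \<Rightarrow> 'a rel \<Rightarrow> 'a rel \<Rightarrow> bool" where
  "k_planar_drawing k E ox oy \<longleftrightarrow>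
     (\<forall>e\<in>E. card {e'\<in>E. edges_cross ox oy e e'} \<le> k)"

definition two_layer_k_planar :: "nat \<Rightarrow> 'a set \<Rightarrow> 'a set \<Rightarrow> ('a \<times> 'a) set \<Rightarrow> bool" where
  "two_layer_k_planar k X Y E \<longleftrightarrow>
     (\<exists>ox oy. two_layer_drawing X Y ox oy \<and> k_planar_drawing k E ox oy)"

end

theory Submission
  imports Defs
begin

text \<open>Let \<open>v\<close> have at least \<open>2k + 3\<close> non-leaf neighbours, lying on the other layer, and let
  \<open>a\<close> be the one with exactly \<open>k + 1\<close> of them on its left, hence at least \<open>k + 1\<close> on its right.
  As \<open>a\<close> is not a leaf it has a second neighbour \<open>w \<noteq> v\<close>. If \<open>w\<close> lies left of \<open>v\<close>, the edge
  \<open>wa\<close> crosses every edge from \<open>v\<close> to a neighbour left of \<open>a\<close>; otherwise it crosses every edge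
  from \<open>v\<close> to a neighbour right of \<open>a\<close>. Either way \<open>wa\<close> has more than \<open>k\<close> crossings.\<close>

lemma strict_linear_order_on_subset:
  "strict_linear_order_on B r \<Longrightarrow> A \<subseteq> B \<Longrightarrow> strict_linear_order_on A r"
  unfolding strict_linear_order_on_def using total_on_subset by blast

lemma card_strict_lower_set_less:
  assumes "finite A" "strict_linear_order_on A r" "a \<in> A" "a' \<in> A" "(a, a') \<in> r"
  shows "card {b \<in> A. (b, a) \<in> r} < card {b \<in> A. (b, a') \<in> r}"
proof (rule psubset_card_mono)
  have "trans r" "irrefl r"
    using assms(2) by (auto simp: strict_linear_order_on_def)
  then show "{b \<in> A. (b, a) \<in> r} \<subset> {b \<in> A. (b, a') \<in> r}"
    using assms(3-5) by (auto dest: transD simp: irrefl_def)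
qed (use assms(1) in simp)

lemma card_strict_lower_set_surj:
  assumes "finite A" "strict_linear_order_on A r" "n < card A"
  obtains a where "a \<in> A" "card {b \<in> A. (b, a) \<in> r} = n"
proof -
  let ?rank = "\<lambda>a. card {b \<in> A. (b, a) \<in> r}"
  have "inj_on ?rank A"
  proof (rule inj_onI)
    fix a a' assume a: "a \<in> A" "a' \<in> A" and same_rank: "?rank a = ?rank a'"
    show "a = a'"
    proof (rule ccontr)
      assume "a \<noteq> a'"
      then have "(a, a') \<in> r \<or> (a', a) \<in> r"
        using assms(2) a by (simp add: strict_linear_order_on_def total_on_def)
      then have "?rank a < ?rank a' \<or> ?rank a' < ?rank a"
        using card_strict_lower_set_less[OF assms(1,2)] a by blast
      then show False
        using same_rank by simp
    qed
  qed
  moreover have "?rank ` A \<subseteq> {..<card A}"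
  proof
    fix c assume "c \<in> ?rank ` A"
    then obtain a where a: "a \<in> A" "c = ?rank a" by blast
    have "irrefl r" using assms(2) by (simp add: strict_linear_order_on_def)
    then have "{b \<in> A. (b, a) \<in> r} \<subset> A"
      using a(1) by (auto simp: irrefl_def)
    then show "c \<in> {..<card A}"
      using a(2) assms(1) by (simp add: psubset_card_mono)
  qed
  ultimately have "?rank ` A = {..<card A}"
    by (simp add: card_image card_subset_eq)
  then have "n \<in> ?rank ` A"
    using assms(3) by simp
  then show ?thesis
    using that by blast
qed

lemma card_strict_lower_plus_upper:
  assumes "finite A" "strict_linear_order_on A r" "a \<in> A"
  shows "card {b \<in> A. (b, a) \<in> r} + card {b \<in> A. (a, b) \<in> r} = card A - 1"
proof -
  have r: "trans r" "irrefl r" "total_on A r"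
    using assms(2) by (auto simp: strict_linear_order_on_def)
  have "{b \<in> A. (b, a) \<in> r} \<union> {b \<in> A. (a, b) \<in> r} = A - {a}"
    using r(2,3) assms(3) by (auto simp: irrefl_def total_on_def)
  moreover have "card ({b \<in> A. (b, a) \<in> r} \<union> {b \<in> A. (a, b) \<in> r}) =
      card {b \<in> A. (b, a) \<in> r} + card {b \<in> A. (a, b) \<in> r}"
    using r(1,2) assms(1) by (intro card_Un_disjoint) (auto dest: transD simp: irrefl_def)
  ultimately show ?thesis
    using assms(1,3) by simp
qed

lemma non_leaf_other_neighbor:
  assumes "v \<in> neighbors E u" "\<not> is_leaf E u"
  obtains w where "w \<in> neighbors E u" "w \<noteq> v"
proof -
  have "neighbors E u \<noteq> {v}"
    using assms(2) by (auto simp: is_leaf_def)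
  then show ?thesis
    using assms(1) that by blast
qed

lemma edges_cross_iff [simp]:
  "edges_cross ox oy (x, y) (x', y') \<longleftrightarrow>
     x \<noteq> x' \<and> y \<noteq> y' \<and> ((x, x') \<in> ox \<and> (y', y) \<in> oy \<or> (x', x) \<in> ox \<and> (y, y') \<in> oy)"
  by (simp add: edges_cross_def)

lemma edges_cross_swap:
  "edges_cross oy ox (prod.swap e) e' = edges_cross ox oy e (prod.swap e')"
  by (cases e; cases e') (auto simp: edges_cross_def)

lemma neighbors_swap [simp]: "neighbors (prod.swap ` E) = neighbors E"
  by (auto simp: neighbors_def)

lemma is_leaf_swap [simp]: "is_leaf (prod.swap ` E) = is_leaf E"
  by (simp add: is_leaf_def fun_eq_iff)

lemma bipartite_graph_swap: "bipartite_graph X Y E \<Longrightarrow> bipartite_graph Y X (prod.swap ` E)"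
  by (auto simp: bipartite_graph_def)

lemma k_planar_drawing_swap:
  assumes "k_planar_drawing k E ox oy"
  shows "k_planar_drawing k (prod.swap ` E) oy ox"
  unfolding k_planar_drawing_def
proof
  fix e assume "e \<in> prod.swap ` E"
  then obtain e\<^sub>0 where "e\<^sub>0 \<in> E" and e: "e = prod.swap e\<^sub>0" by blast
  have "{e' \<in> prod.swap ` E. edges_cross oy ox e e'} =
      prod.swap ` {e' \<in> E. edges_cross ox oy e\<^sub>0 e'}"
    unfolding e by (auto simp: edges_cross_swap)
  then show "card {e' \<in> prod.swap ` E. edges_cross oy ox e e'} \<le> k"
    using assms \<open>e\<^sub>0 \<in> E\<close> by (simp add: card_image k_planar_drawing_def)
qed

lemma two_layer_k_planar_swap:
  "two_layer_k_planar k X Y E \<Longrightarrow> two_layer_k_planar k Y X (prod.swap ` E)"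
  unfolding two_layer_k_planar_def two_layer_drawing_def
  using k_planar_drawing_swap by blast

lemma card_crossings_ge_min_sides:
  assumes drawing: "two_layer_drawing X Y ox oy" and "finite E"
    and "v \<in> X" "w \<in> X" "w \<noteq> v" and N: "\<And>u. u \<in> N \<Longrightarrow> (v, u) \<in> E"
  shows "min (card {u \<in> N. (u, a) \<in> oy}) (card {u \<in> N. (a, u) \<in> oy})
    \<le> card {e \<in> E. edges_cross ox oy (w, a) e}"
proof -
  have side: "(w, v) \<in> ox \<or> (v, w) \<in> ox" and "irrefl oy"
    using drawing assms(3-5) by (auto simp: two_layer_drawing_def strict_linear_order_on_def total_on_def)
  define S where "S = (if (w, v) \<in> ox then {u \<in> N. (u, a) \<in> oy} else {u \<in> N. (a, u) \<in> oy})"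
  have "min (card {u \<in> N. (u, a) \<in> oy}) (card {u \<in> N. (a, u) \<in> oy}) \<le> card S"
    by (simp add: S_def)
  also have "\<dots> = card (Pair v ` S)"
    by (simp add: card_image inj_on_def)
  also have "\<dots> \<le> card {e \<in> E. edges_cross ox oy (w, a) e}"
  proof (rule card_mono)
    show "Pair v ` S \<subseteq> {e \<in> E. edges_cross ox oy (w, a) e}"
      using side \<open>irrefl oy\<close> \<open>w \<noteq> v\<close> N by (auto simp: S_def irrefl_def)
  qed (use \<open>finite E\<close> in simp)
  finally show ?thesis .
qed

lemma not_two_layer_k_planar_if_many_non_leaf_neighbors_in_first_layer:
  assumes G: "bipartite_graph X Y E" and "v \<in> X"
    and many: "card {u \<in> neighbors E v. \<not> is_leaf E u} > 2 * k + 2"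
  shows "\<not> two_layer_k_planar k X Y E"
proof
  assume "two_layer_k_planar k X Y E"
  then obtain ox oy where drawing: "two_layer_drawing X Y ox oy"
    and planar: "k_planar_drawing k E ox oy"
    unfolding two_layer_k_planar_def by blast
  have E: "finite E" "E \<subseteq> X \<times> Y" "X \<inter> Y = {}"
    using G finite_subset[of E "X \<times> Y"] by (auto simp: bipartite_graph_def)
  define N where "N = {u \<in> neighbors E v. \<not> is_leaf E u}"
  have N_edges: "(v, u) \<in> E" "u \<in> Y" if "u \<in> N" for u
    using that E(2,3) \<open>v \<in> X\<close> by (auto simp: N_def neighbors_def)
  have "finite N"
    using N_edges(2) G by (auto simp: bipartite_graph_def intro: finite_subset)
  have "strict_linear_order_on Y oy"
    using drawing by (simp add: two_layer_drawing_def)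
  then have oyN: "strict_linear_order_on N oy"
    using N_edges(2) by (blast intro: strict_linear_order_on_subset)
  obtain a where a: "a \<in> N" and lower: "card {u \<in> N. (u, a) \<in> oy} = k + 1"
    using card_strict_lower_set_surj[OF \<open>finite N\<close> oyN, of "k + 1"] many N_def by auto
  have upper: "card {u \<in> N. (a, u) \<in> oy} \<ge> k + 1"
    using card_strict_lower_plus_upper[OF \<open>finite N\<close> oyN a] lower many N_def by simp
  have "v \<in> neighbors E a" "\<not> is_leaf E a"
    using a N_edges(1)[OF a] by (auto simp: N_def neighbors_def)
  then obtain w where "w \<in> neighbors E a" "w \<noteq> v"
    by (rule non_leaf_other_neighbor)
  then have wa: "(w, a) \<in> E" "w \<in> X"
    using E(2,3) N_edges(2)[OF a] by (auto simp: neighbors_def)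
  have "k + 1 \<le> min (card {u \<in> N. (u, a) \<in> oy}) (card {u \<in> N. (a, u) \<in> oy})"
    using lower upper by simp
  also have "\<dots> \<le> card {e \<in> E. edges_cross ox oy (w, a) e}"
    using card_crossings_ge_min_sides[OF drawing E(1) \<open>v \<in> X\<close> wa(2) \<open>w \<noteq> v\<close> N_edges(1)] .
  also have "\<dots> \<le> k"
    using planar wa(1) by (simp add: k_planar_drawing_def)
  finally show False
    by simp
qed

theorem mainTheorem9:
  fixes X Y :: "'a set" and E :: "('a \<times> 'a) set" and k :: nat
  assumes "bipartite_graph X Y E"
    and "\<exists>v \<in> X \<union> Y. card {u \<in> neighbors E v. \<not> is_leaf E u} > 2 * k + 2"
  shows "\<not> two_layer_k_planar k X Y E"
proof -
  obtain v where "v \<in> X \<union> Y" and many: "card {u \<in> neighbors E v. \<not> is_leaf E u} > 2 * k + 2"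
    using assms(2) by blast
  then consider "v \<in> X" | "v \<in> Y" by blast
  then show ?thesis
  proof cases
    case 1
    with assms(1) show ?thesis
      using many by (rule not_two_layer_k_planar_if_many_non_leaf_neighbors_in_first_layer)
  next
    case 2
    have "card {u \<in> neighbors (prod.swap ` E) v. \<not> is_leaf (prod.swap ` E) u} > 2 * k + 2"
      using many by simp
    with bipartite_graph_swap[OF assms(1)] 2
    have "\<not> two_layer_k_planar k Y X (prod.swap ` E)"
      by (rule not_two_layer_k_planar_if_many_non_leaf_neighbors_in_first_layer)
    then show ?thesis
      using two_layer_k_planar_swap by blast
  qed
qed

end
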